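(* Let $s\geq 2$ and let $n_1>n_2>\cdots>n_s\geq 2$ be integers, and $S=\{n_1,\ldots,n_s\}$. Let $\delta_3(S)$ denote the minimum number of vertices of a $3$-uniform bi-hypergraph $\mathcal H=(X,\mathcal B)$ which is a one-realization of $S$. Then $\delta_3(S)\geq 2n_1-\left\lfloor \frac{n_2+1}{n_1}\right\rfloor$.
   Context: A bi-hypergraph is a pair $\mathcal H=(X,\mathcal B)$ with $X$ finite and $\mathcal B$ a family of subsets of $X$ (each member serving simultaneously as a $\mathcal C$-edge and a $\mathcal D$-edge); it is $3$-uniform if every member of $\mathcal B$ has exactly $3$ elements. A strict $k$-coloring is a partition of $X$ into exactly $k$ nonempty classes such that every edge of $\mathcal B$ contains two vertices of a common class and two vertices of distinct classes. The feasible set $\Phi(\mathcal H)$ is the set of $k$ admitting a strict $k$-coloring. The chromatic spectrum is $(r_1,\ldots,r_{\bar\chi})$ with $r_k$ the number of strict $k$-colorings (as partitions) and $\bar\chi=\max\Phi(\mathcal H)$. $\mathcal H$ is a one-realization of $S$ if $\Phi(\mathcal H)=S$ and each $r_k\in\{0,1\}$. *)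

theory Defs
  imports Complex_Main "HOL-Library.Disjoint_Sets"
begin

definition bihypergraph :: "'a set \<Rightarrow> 'a set set \<Rightarrow> bool" where
  "bihypergraph X B \<longleftrightarrow> finite X \<and> (\<forall>E\<in>B. E \<subseteq> X)"

definition uniform3 :: "'a set set \<Rightarrow> bool" where
  "uniform3 B \<longleftrightarrow> (\<forall>E\<in>B. card E = 3)"

definition strict_coloring :: "'a set \<Rightarrow> 'a set set \<Rightarrow> nat \<Rightarrow> 'a set set \<Rightarrow> bool" where
  "strict_coloring X B k P \<longleftrightarrow>
     partition_on X P \<and> card P = k \<and>
     (\<forall>E\<in>B.
        (\<exists>x\<in>E. \<exists>y\<in>E. x \<noteq> y \<and> (\<exists>C\<in>P. x \<in> C \<and> y \<in> C)) \<and>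
        (\<exists>x\<in>E. \<exists>y\<in>E. \<not> (\<exists>C\<in>P. x \<in> C \<and> y \<in> C)))"

definition feasible_set :: "'a set \<Rightarrow> 'a set set \<Rightarrow> nat set" where
  "feasible_set X B = {k. \<exists>P. strict_coloring X B k P}"

definition num_colorings :: "'a set \<Rightarrow> 'a set set \<Rightarrow> nat \<Rightarrow> nat" where
  "num_colorings X B k = card {P. strict_coloring X B k P}"

definition one_realization :: "'a set \<Rightarrow> 'a set set \<Rightarrow> nat set \<Rightarrow> bool" where
  "one_realization X B S \<longleftrightarrow>
     feasible_set X B = S \<and> (\<forall>k. num_colorings X B k \<in> {0, 1})"

end

theory Submission
  imports Defs
begin

text \<open>
  Fix a strict \<open>n\<^sub>1\<close>-coloring \<open>P\<close>. Merging two singleton classes of a strict coloring of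
  a 3-uniform bi-hypergraph gives a strict coloring with one class less; hence uniqueness allows at
  most two singleton classes, and if there are two of them then \<open>n\<^sub>1 - 1\<close> is feasible, i.e.
  \<open>n\<^sub>2 = n\<^sub>1 - 1\<close>. If all classes had at most two elements, a set meeting every class in one
  point would be a strict 2-coloring, and flipping it on one 2-element class would give a second one;
  so some class has at least three elements. Counting elements class by class,
  \<open>|X|\<close> is at least \<open>2 n\<^sub>1 + 1\<close> minus the number of singleton classes, which gives the bound.
\<close>

lemma partition_on_class_unique:
  "partition_on X P \<Longrightarrow> C \<in> P \<Longrightarrow> D \<in> P \<Longrightarrow> x \<in> C \<Longrightarrow> x \<in> D \<Longrightarrow> C = D"
  unfolding partition_on_def disjoint_def by blast

lemma partition_on_merge:
  assumes "partition_on X P" "C \<in> P" "D \<in> P"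
  shows "partition_on X (insert (C \<union> D) (P - {C, D}))"
proof (rule partition_onI)
  show "\<Union>(insert (C \<union> D) (P - {C, D})) = X"
    using partition_onD1[OF assms(1)] assms(2,3) by auto
  show "{} \<notin> insert (C \<union> D) (P - {C, D})"
    using partition_onD3[OF assms(1)] assms(2) by auto
  show "disjnt p q" if "p \<in> insert (C \<union> D) (P - {C, D})" "q \<in> insert (C \<union> D) (P - {C, D})" "p \<noteq> q"
    for p q
    using that partition_onD2[OF assms(1)] assms(2,3) unfolding disjoint_def disjnt_def by blast
qed

lemma partition_on_separating_set:
  assumes P: "partition_on X P" and "finite X" and small: "\<And>C. C \<in> P \<Longrightarrow> card C \<le> 2"
  obtains A where "A \<subseteq> X"
    "\<And>K x y. K \<in> P \<Longrightarrow> x \<in> K \<Longrightarrow> y \<in> K \<Longrightarrow> x \<noteq> y \<Longrightarrow> x \<in> A \<longleftrightarrow> y \<notin> A"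
proof -
  obtain g where g: "\<And>K. K \<in> P \<Longrightarrow> g K \<in> K"
    using partition_onD3[OF P] by (metis all_not_in_conv)
  have mem: "x \<in> g ` P \<longleftrightarrow> x = g K" if "K \<in> P" "x \<in> K" for K x
    using that g partition_on_class_unique[OF P] by blast
  show thesis
  proof (rule that)
    show "g ` P \<subseteq> X"
      using g partition_onD1[OF P] by blast
    fix K x y
    assume K: "K \<in> P" "x \<in> K" "y \<in> K" "x \<noteq> y"
    have "finite K"
      using partition_onD1[OF P] K(1) \<open>finite X\<close> by (auto intro: finite_subset)
    then have "K = {x, y}"
      using small[OF K(1)] K card_seteq[of K "{x, y}"] by auto
    then have "g K = x \<or> g K = y"
      using g[OF K(1)] by auto
    then show "x \<in> g ` P \<longleftrightarrow> y \<notin> g ` P"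
      using mem[OF K(1,2)] mem[OF K(1,3)] \<open>x \<noteq> y\<close> by auto
  qed
qed

lemma separating_set_flip:
  assumes P: "partition_on X P" and "D \<in> P"
    and sep: "\<And>K x y. K \<in> P \<Longrightarrow> x \<in> K \<Longrightarrow> y \<in> K \<Longrightarrow> x \<noteq> y \<Longrightarrow> x \<in> A \<longleftrightarrow> y \<notin> A"
    and K: "K \<in> P" "x \<in> K" "y \<in> K" "x \<noteq> y"
  shows "x \<in> (A - D) \<union> (D - A) \<longleftrightarrow> y \<notin> (A - D) \<union> (D - A)"
proof (cases "K = D")
  case True
  then show ?thesis
    using sep[OF K] K(2,3) by auto
next
  case False
  then have "x \<notin> D" "y \<notin> D"
    using partition_on_class_unique[OF P K(1) \<open>D \<in> P\<close>] K(2,3) by blast+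
  then show ?thesis
    using sep[OF K] by auto
qed

lemma finite_partition_card_bound:
  assumes P: "partition_on X P" and "finite X" and C0: "C0 \<in> P" "3 \<le> card C0"
  shows "2 * card P + 1 \<le> card X + card {C\<in>P. card C = 1}"
proof -
  have fP: "finite P" using finite_elements[OF \<open>finite X\<close> P] .
  have fin: "\<And>C. C \<in> P \<Longrightarrow> finite C"
    using partition_onD1[OF P] \<open>finite X\<close> by (auto intro: finite_subset)
  have ne: "\<And>C. C \<in> P \<Longrightarrow> C \<noteq> {}" using partition_onD3[OF P] by blast
  have "2 * card P + 1 = (\<Sum>C\<in>P. 2) + (\<Sum>C\<in>P. if C = C0 then 1 else 0)"
    using fP C0 by (simp add: sum.delta)
  also have "\<dots> = (\<Sum>C\<in>P. 2 + (if C = C0 then 1 else 0))"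
    by (rule sum.distrib[symmetric])
  also have "\<dots> \<le> (\<Sum>C\<in>P. card C + (if card C = 1 then 1 else 0))"
  proof (rule sum_mono)
    fix C assume "C \<in> P"
    with fin[of C] ne[of C] C0
    show "2 + (if C = C0 then 1 else 0) \<le> card C + (if card C = 1 then 1 else (0::nat))"
      by (cases "card C") auto
  qed
  also have "\<dots> = card X + card {C\<in>P. card C = 1}"
    using product_partition[OF P fin] fP by (simp add: sum.distrib sum.inter_filter[symmetric])
  finally show ?thesis .
qed

lemma antitone_on_interval_of_step:
  fixes n :: "nat \<Rightarrow> nat"
  assumes step: "\<And>i. 1 \<le> i \<Longrightarrow> i < s \<Longrightarrow> n i > n (Suc i)"
    and "1 \<le> i" "i \<le> j" "j \<le> s"
  shows "n j \<le> n i"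
  using assms(3,4)
proof (induction j rule: dec_induct)
  case (step k)
  then show ?case using assms(1)[of k] \<open>1 \<le> i\<close> by simp
qed simp

lemma one_realization_strict_coloring_unique:
  assumes "one_realization X B S" "finite X"
    and "strict_coloring X B k P1" "strict_coloring X B k P2"
  shows "P1 = P2"
proof -
  have fin: "finite {P. strict_coloring X B k P}"
    using finitely_many_partition_on[OF \<open>finite X\<close>]
    by (rule finite_subset[rotated]) (auto simp: strict_coloring_def)
  have "num_colorings X B k \<in> {0, 1}"
    using assms(1) by (simp add: one_realization_def)
  then have "card {P. strict_coloring X B k P} \<le> Suc 0"
    by (auto simp: num_colorings_def)
  then show ?thesis
    using assms(3,4) card_le_Suc0_iff_eq[OF fin] by blast
qed

lemma strict_coloring_edgeE:
  assumes "strict_coloring X B k P" "E \<in> B"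
  obtains x y C u v where "x \<in> E" "y \<in> E" "x \<noteq> y" "C \<in> P" "x \<in> C" "y \<in> C"
    "u \<in> E" "v \<in> E" "\<not> (\<exists>C\<in>P. u \<in> C \<and> v \<in> C)"
proof -
  have "\<forall>E\<in>B. (\<exists>x\<in>E. \<exists>y\<in>E. x \<noteq> y \<and> (\<exists>C\<in>P. x \<in> C \<and> y \<in> C)) \<and>
        (\<exists>x\<in>E. \<exists>y\<in>E. \<not> (\<exists>C\<in>P. x \<in> C \<and> y \<in> C))"
    using assms(1) unfolding strict_coloring_def by (elim conjE)
  with assms(2) that show thesis by metis
qed

lemma card_merge_singletons:
  assumes "finite P" "{a} \<in> P" "{b} \<in> P" "a \<noteq> b" "{a, b} \<notin> P"
  shows "card (insert {a, b} (P - {{a}, {b}})) = card P - 1"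
proof -
  have "card {{a}, {b}} \<le> card P"
    using assms(1-3) by (intro card_mono) auto
  then show ?thesis
    using assms by (simp add: card_Diff_subset doubleton_eq_iff)
qed

text \<open>A monochromatic pair of an edge avoids the two singletons, so in a 3-element edge the merged
  pair \<open>{a, b}\<close> cannot be one of its previously bichromatic pairs.\<close>
lemma strict_coloring_merge_singletons:
  assumes sc: "strict_coloring X B k P" and "uniform3 B" and "finite X"
    and a: "{a} \<in> P" and b: "{b} \<in> P" and "a \<noteq> b"
  shows "strict_coloring X B (k - 1) (insert {a, b} (P - {{a}, {b}}))"
    (is "strict_coloring X B _ ?Q")
proof -
  have P: "partition_on X P" and "card P = k"
    using sc by (auto simp: strict_coloring_def)
  have Q: "partition_on X ?Q"
    using partition_on_merge[OF P a b] by (simp add: insert_commute)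
  have "{a, b} \<notin> P"
    using partition_on_class_unique[OF P a, of "{a, b}" a] \<open>a \<noteq> b\<close> by auto
  then have "card ?Q = k - 1"
    using card_merge_singletons[OF finite_elements[OF \<open>finite X\<close> P] a b \<open>a \<noteq> b\<close>] \<open>card P = k\<close>
    by simp
  moreover have "(\<exists>x\<in>E. \<exists>y\<in>E. x \<noteq> y \<and> (\<exists>C\<in>?Q. x \<in> C \<and> y \<in> C)) \<and>
      (\<exists>x\<in>E. \<exists>y\<in>E. \<not> (\<exists>C\<in>?Q. x \<in> C \<and> y \<in> C))" if E: "E \<in> B" for E
  proof
    obtain x y C u v where xy: "x \<in> E" "y \<in> E" "x \<noteq> y" "C \<in> P" "x \<in> C" "y \<in> C"
      and uv: "u \<in> E" "v \<in> E" "\<not> (\<exists>C\<in>P. u \<in> C \<and> v \<in> C)"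
      using strict_coloring_edgeE[OF sc E] by metis
    have "C \<noteq> {a}" "C \<noteq> {b}"
      using xy by auto
    then have "C \<in> ?Q"
      using xy(4) by simp
    have "x \<notin> {a, b}" "y \<notin> {a, b}"
      using partition_on_class_unique[OF P xy(4) a] partition_on_class_unique[OF P xy(4) b]
        xy(5,6) \<open>C \<noteq> {a}\<close> \<open>C \<noteq> {b}\<close> by auto
    show "\<exists>x\<in>E. \<exists>y\<in>E. x \<noteq> y \<and> (\<exists>C\<in>?Q. x \<in> C \<and> y \<in> C)"
      using xy \<open>C \<in> ?Q\<close> by blast
    have "\<not> (\<exists>D\<in>?Q. u \<in> D \<and> v \<in> D)"
    proof
      assume "\<exists>D\<in>?Q. u \<in> D \<and> v \<in> D"
      then have "u \<in> {a, b}" "v \<in> {a, b}" "u \<noteq> v"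
        using uv(3) a b by fastforce+
      then have "{u, v} = {a, b}"
        by auto
      then have "{a, b, x, y} \<subseteq> E"
        using uv xy by auto
      moreover have "card {a, b, x, y} = 4"
        using \<open>x \<notin> {a, b}\<close> \<open>y \<notin> {a, b}\<close> xy(3) \<open>a \<noteq> b\<close> by auto
      moreover have "card E = 3"
        using \<open>uniform3 B\<close> E by (simp add: uniform3_def)
      moreover have "finite E"
        using \<open>card E = 3\<close> card.infinite by fastforce
      ultimately show False
        by (metis card_mono numeral_le_iff semiring_norm(69,72))
    qed
    then show "\<exists>x\<in>E. \<exists>y\<in>E. \<not> (\<exists>C\<in>?Q. x \<in> C \<and> y \<in> C)"
      using uv by blast
  qed
  ultimately show ?thesis
    using Q by (simp add: strict_coloring_def)
qed

lemma strict_coloring_two_of_separating: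
  assumes sc: "strict_coloring X B k P" and "uniform3 B" and "bihypergraph X B"
    and A: "A \<subseteq> X" "A \<noteq> {}" "A \<noteq> X"
    and separating: "\<And>K x y. K \<in> P \<Longrightarrow> x \<in> K \<Longrightarrow> y \<in> K \<Longrightarrow> x \<noteq> y \<Longrightarrow> x \<in> A \<longleftrightarrow> y \<notin> A"
  shows "strict_coloring X B 2 {A, X - A}"
proof -
  have "partition_on X {A, X - A}"
    using A by (intro partition_onI) (auto simp: disjnt_def)
  moreover have "card {A, X - A} = 2"
    using A by (cases "A = X - A") auto
  moreover have "(\<exists>x\<in>E. \<exists>y\<in>E. x \<noteq> y \<and> (\<exists>C\<in>{A, X - A}. x \<in> C \<and> y \<in> C)) \<and>
      (\<exists>x\<in>E. \<exists>y\<in>E. \<not> (\<exists>C\<in>{A, X - A}. x \<in> C \<and> y \<in> C))" if E: "E \<in> B" for E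
  proof
    have "E \<subseteq> X" and "card E = 3"
      using assms(2,3) E by (auto simp: bihypergraph_def uniform3_def)
    then obtain p q r where E_eq: "E = {p, q, r}" "p \<noteq> q" "q \<noteq> r" "p \<noteq> r" "p \<in> X" "q \<in> X" "r \<in> X"
      by (auto simp: card_3_iff)
    have same_side: "\<exists>C\<in>{A, X - A}. x \<in> C \<and> y \<in> C" if "x \<in> X" "y \<in> X" "x \<in> A \<longleftrightarrow> y \<in> A" for x y
      using that by auto
    consider "p \<in> A \<longleftrightarrow> q \<in> A" | "p \<in> A \<longleftrightarrow> r \<in> A" | "q \<in> A \<longleftrightarrow> r \<in> A"
      by blast
    then show "\<exists>x\<in>E. \<exists>y\<in>E. x \<noteq> y \<and> (\<exists>C\<in>{A, X - A}. x \<in> C \<and> y \<in> C)"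
      by cases (use E_eq same_side in blast)+
    obtain x y C where "x \<in> E" "y \<in> E" "x \<noteq> y" "C \<in> P" "x \<in> C" "y \<in> C"
      using strict_coloring_edgeE[OF sc E] by metis
    then show "\<exists>x\<in>E. \<exists>y\<in>E. \<not> (\<exists>C\<in>{A, X - A}. x \<in> C \<and> y \<in> C)"
      using separating by blast
  qed
  ultimately show ?thesis
    by (simp add: strict_coloring_def)
qed

lemma one_realization_small_classes:
  assumes one: "one_realization X B S" and sc: "strict_coloring X B k P"
    and "uniform3 B" and bh: "bihypergraph X B"
    and small: "\<And>C. C \<in> P \<Longrightarrow> card C \<le> 2" and D: "D \<in> P" "card D = 2"
  shows "P = {D}"
proof (rule ccontr)
  assume "P \<noteq> {D}"
  have P: "partition_on X P"
    using sc by (simp add: strict_coloring_def)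
  have "finite X"
    using bh by (simp add: bihypergraph_def)
  obtain C where C: "C \<in> P" "C \<noteq> D"
    using \<open>P \<noteq> {D}\<close> D(1) by blast
  then obtain c where "c \<in> C"
    using partition_onD3[OF P] C(1) by (metis equals0I)
  obtain d1 d2 where d: "D = {d1, d2}" "d1 \<noteq> d2"
    using D(2) by (auto simp: card_2_iff)
  have "D \<subseteq> X" "C \<subseteq> X"
    using partition_onD1[OF P] D(1) C(1) by auto
  have "c \<notin> D"
    using partition_on_class_unique[OF P C(1) D(1)] C(2) \<open>c \<in> C\<close> by blast
  have two_coloring: "strict_coloring X B 2 {A, X - A}"
    if "A \<subseteq> X" and sep: "\<And>K x y. K \<in> P \<Longrightarrow> x \<in> K \<Longrightarrow> y \<in> K \<Longrightarrow> x \<noteq> y \<Longrightarrow> x \<in> A \<longleftrightarrow> y \<notin> A"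
    for A
  proof (rule strict_coloring_two_of_separating[OF sc \<open>uniform3 B\<close> bh \<open>A \<subseteq> X\<close> _ _ sep])
    have "d1 \<in> A \<longleftrightarrow> d2 \<notin> A"
      using sep[OF D(1)] d by auto
    then show "A \<noteq> {}" "A \<noteq> X"
      using \<open>D \<subseteq> X\<close> d(1) by auto
  qed
  obtain A where A: "A \<subseteq> X"
    and sep: "\<And>K x y. K \<in> P \<Longrightarrow> x \<in> K \<Longrightarrow> y \<in> K \<Longrightarrow> x \<noteq> y \<Longrightarrow> x \<in> A \<longleftrightarrow> y \<notin> A"
    using partition_on_separating_set[OF P \<open>finite X\<close> small] by blast
  define A' where "A' = (A - D) \<union> (D - A)"
  have "A' \<subseteq> X"
    using A \<open>D \<subseteq> X\<close> by (auto simp: A'_def)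
  have sep': "x \<in> A' \<longleftrightarrow> y \<notin> A'" if "K \<in> P" "x \<in> K" "y \<in> K" "x \<noteq> y" for K x y
    using separating_set_flip[OF P D(1) sep that] by (simp add: A'_def)
  have "{A, X - A} = {A', X - A'}"
    using one_realization_strict_coloring_unique[OF one \<open>finite X\<close>
        two_coloring[OF A sep] two_coloring[OF \<open>A' \<subseteq> X\<close> sep']] .
  moreover have "A \<noteq> A'"
    using d(1) by (auto simp: A'_def)
  moreover have "A \<noteq> X - A'"
    using \<open>c \<notin> D\<close> \<open>C \<subseteq> X\<close> \<open>c \<in> C\<close> by (auto simp: A'_def)
  ultimately show False
    by (metis doubleton_eq_iff)
qed

lemma one_realization_singleton_classes:
  assumes one: "one_realization X B S" and sc: "strict_coloring X B k P"
    and "uniform3 B" and "finite X"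
  shows "card {C\<in>P. card C = 1} \<le> 2"
proof (rule ccontr)
  assume "\<not> ?thesis"
  then have "3 \<le> card {C\<in>P. card C = 1}"
    by simp
  then obtain T where T: "T \<subseteq> {C\<in>P. card C = 1}" "card T = 3"
    by (rule obtain_subset_with_card_n)
  then obtain A B' C where ABC: "A \<in> T" "B' \<in> T" "C \<in> T" "A \<noteq> B'" "A \<noteq> C" "B' \<noteq> C"
    by (auto simp: card_3_iff)
  moreover have "card A = 1" "card B' = 1" "card C = 1"
    using ABC(1-3) T(1) by auto
  ultimately obtain a b c where "A = {a}" "B' = {b}" "C = {c}"
    by (meson card_1_singletonE)
  then have abc: "{a} \<in> P" "{b} \<in> P" "{c} \<in> P" "a \<noteq> b" "a \<noteq> c" "b \<noteq> c"
    using ABC T(1) by auto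
  have P: "partition_on X P"
    using sc by (simp add: strict_coloring_def)
  have "{a, b} \<in> insert {a, c} (P - {{a}, {c}})"
    using one_realization_strict_coloring_unique[OF one \<open>finite X\<close>
        strict_coloring_merge_singletons[OF sc \<open>uniform3 B\<close> \<open>finite X\<close> abc(1,2,4)]
        strict_coloring_merge_singletons[OF sc \<open>uniform3 B\<close> \<open>finite X\<close> abc(1,3,5)]]
    by blast
  moreover have "{a, b} \<noteq> {a, c}"
    using abc(4-6) by (simp add: doubleton_eq_iff)
  ultimately have "{a, b} \<in> P"
    by blast
  then show False
    using partition_on_class_unique[OF P abc(1), of "{a, b}" a] abc(4) by auto
qed

lemma one_realization_large_class:
  assumes one: "one_realization X B S" and sc: "strict_coloring X B k P"
    and "uniform3 B" and bh: "bihypergraph X B" and "3 \<le> k"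
  shows "\<exists>C\<in>P. 3 \<le> card C"
proof (rule ccontr)
  assume "\<not> ?thesis"
  then have small: "\<And>C. C \<in> P \<Longrightarrow> card C \<le> 2"
    by fastforce
  have P: "partition_on X P" and "card P = k"
    using sc by (simp_all add: strict_coloring_def)
  have "finite X"
    using bh by (simp add: bihypergraph_def)
  have "card {C\<in>P. card C = 1} \<le> 2"
    using one_realization_singleton_classes[OF one sc \<open>uniform3 B\<close> \<open>finite X\<close>] .
  then have "{C\<in>P. card C = 1} \<noteq> P"
    using \<open>card P = k\<close> \<open>3 \<le> k\<close> by auto
  then obtain D where D: "D \<in> P" "card D \<noteq> 1"
    by blast
  moreover have "card D \<noteq> 0"
    using D(1) partition_onD1[OF P] partition_onD3[OF P] \<open>finite X\<close>
    by (metis Union_upper card_0_eq finite_subset)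
  ultimately have "card D = 2"
    using small[OF D(1)] by linarith
  then have "P = {D}"
    using one_realization_small_classes[OF one sc \<open>uniform3 B\<close> bh small D(1)] by blast
  then show False
    using \<open>card P = k\<close> \<open>3 \<le> k\<close> by simp
qed

lemma strict_coloring_two_singletons_feasible:
  assumes sc: "strict_coloring X B k P" and "uniform3 B" and "finite X"
    and "card {C\<in>P. card C = 1} = 2"
  shows "k - 1 \<in> feasible_set X B"
proof -
  obtain A B' where "{A, B'} = {C\<in>P. card C = 1}" "A \<noteq> B'"
    using assms(4) by (metis card_2_iff)
  then have "A \<in> P" "B' \<in> P" "card A = 1" "card B' = 1" "A \<noteq> B'"
    by blast+
  then obtain a b where "{a} \<in> P" "{b} \<in> P" "a \<noteq> b"
    by (metis card_1_singletonE)
  then show ?thesis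
    using strict_coloring_merge_singletons[OF sc \<open>uniform3 B\<close> \<open>finite X\<close>]
    by (auto simp: feasible_set_def)
qed

lemma one_realization_card_lower_bound:
  assumes one: "one_realization X B S" and sc: "strict_coloring X B k P"
    and "uniform3 B" and bh: "bihypergraph X B" and "3 \<le> k"
  shows "2 * k \<le> card X + 1" and "k - 1 \<notin> S \<Longrightarrow> 2 * k \<le> card X"
proof -
  have "finite X"
    using bh by (simp add: bihypergraph_def)
  have P: "partition_on X P" "card P = k"
    using sc by (simp_all add: strict_coloring_def)
  obtain C0 where "C0 \<in> P" "3 \<le> card C0"
    using one_realization_large_class[OF one sc \<open>uniform3 B\<close> bh \<open>3 \<le> k\<close>] by blast
  then have count: "2 * k + 1 \<le> card X + card {C\<in>P. card C = 1}"
    using finite_partition_card_bound[OF P(1) \<open>finite X\<close>] P(2) by simp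
  have singletons: "card {C\<in>P. card C = 1} \<le> 2"
    using one_realization_singleton_classes[OF one sc \<open>uniform3 B\<close> \<open>finite X\<close>] .
  then show "2 * k \<le> card X + 1"
    using count by linarith
  assume "k - 1 \<notin> S"
  then have "card {C\<in>P. card C = 1} \<noteq> 2"
    using strict_coloring_two_singletons_feasible[OF sc \<open>uniform3 B\<close> \<open>finite X\<close>] one
    by (auto simp: one_realization_def)
  then show "2 * k \<le> card X"
    using count singletons by linarith
qed

theorem lemma2p1:
  fixes s :: nat and n :: "nat \<Rightarrow> nat" and X :: "'a set" and B :: "'a set set"
  assumes "s \<ge> 2"
    and "\<And>i. 1 \<le> i \<Longrightarrow> i < s \<Longrightarrow> n i > n (Suc i)"
    and "n s \<ge> 2"
    and "bihypergraph X B" and "uniform3 B"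
    and "one_realization X B (n ` {1..s})"
  shows "int (card X) \<ge> 2 * int (n 1) - \<lfloor>real (n 2 + 1) / real (n 1)\<rfloor>"
proof -
  have antitone: "\<And>i j. 1 \<le> i \<Longrightarrow> i \<le> j \<Longrightarrow> j \<le> s \<Longrightarrow> n j \<le> n i"
    using antitone_on_interval_of_step[where s = s and n = n, OF assms(2)] by blast
  have "n 2 < n 1" "2 \<le> n 2"
    using assms(1) assms(2)[of 1] assms(3) antitone[of 2 s] by (simp_all add: numeral_2_eq_2)
  obtain P where sc: "strict_coloring X B (n 1) P"
    using assms(1,6) by (force simp: one_realization_def feasible_set_def)
  note bound = one_realization_card_lower_bound[OF assms(6) sc assms(5,4)]
  show ?thesis
  proof (cases "n 1 - 1 \<in> n ` {1..s}")
    case True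
    then obtain j where j: "n 1 - 1 = n j" "j \<in> {1..s}"
      by (rule imageE)
    moreover have "j \<noteq> 1"
      using j(1) \<open>n 2 < n 1\<close> by auto
    ultimately have "n 2 + 1 = n 1"
      using antitone[of 2 j] \<open>n 2 < n 1\<close> by auto
    then have "\<lfloor>real (n 2 + 1) / real (n 1)\<rfloor> = 1"
      using \<open>n 2 < n 1\<close> by simp
    then show ?thesis
      using bound(1) \<open>n 2 < n 1\<close> \<open>2 \<le> n 2\<close> by linarith
  next
    case False
    have "0 \<le> \<lfloor>real (n 2 + 1) / real (n 1)\<rfloor>"
      by simp
    then show ?thesis
      using bound(2) False \<open>n 2 < n 1\<close> \<open>2 \<le> n 2\<close> by linarith
  qed
qed

end
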